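(* Let $(M,g)$ be a Riemannian manifold of dimension $n$, and let $N\ge1$ (with $2N\le n$ if $n$ is even). Then the operator-valued polynomial $$\pi_{2N}(\lambda)=\sum_{k=1}^N \mathcal{C}_{2N}^{(k)}\frac{1}{(N-k)!}\left(\lambda+\frac n2-N\right)^{N-k}$$ satisfies $$\pi_{2N}\!\left(-\frac n2+2N-j\right)=(-1)^jP_{2j}\,\pi_{2N-2j}\!\left(-\frac n2+2N-j\right),\quad j=1,\dots,N-1,$$ and $$\pi_{2N}\!\left(-\frac n2+N\right)=(-1)^{N-1}P_{2N}.$$
   Context: $P_{2N}$ denote the GJMS-operators of $(M,g)$ (conformally covariant operators $\Delta^N+$ lower order terms, $-\Delta\ge0$). A composition $I=(I_1,\dots,I_r)$ is an ordered sequence of integers $I_j\ge1$ with size $|I|=\sum I_j$; $P_{2I}=P_{2I_1}\circ\cdots\circ P_{2I_r}$. Multiplicities: $m_I^{(1)}=m_I=-(-1)^r|I|!(|I|-1)!\prod_{j=1}^r\frac{1}{I_j!(I_j-1)!}\prod_{j=1}^{r-1}\frac{1}{I_j+I_{j+1}}$ (empty products $=1$). The Stirling numbers of the first kind $s(n,k)$ are defined by $\sum_{k=0}^n s(n,k)x^k=x(x-1)\cdots(x-n+1)$. For $k\ge2$: if $a\ge1$, $J$ a non-empty composition, $a+|J|=N$ and $2\le k\le N-1$, $$m^{(k)}_{(a,J)}=\frac{\sum_{j=0}^{k-1}s(N,N-j)|J|^{k-1-j}}{(N-1)\cdots(N-k+1)}\,m^{(1)}_{(a,J)},$$ and for $2\le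 k\le N$, $m^{(k)}_{(N)}=\frac{s(N,N-k+1)}{(N-1)\cdots(N-k+1)}m^{(1)}_{(N)}$. Define $\mathcal{C}^{(k)}_{2N}=\sum_{|I|=N}m_I^{(k)}P_{2I}$ for $1\le k\le N-1$ and $\mathcal{C}^{(N)}_{2N}=(-1)^{N-1}P_{2N}$. The polynomials $\pi_{2M}$ for $M<N$ are defined by the same formula with $N$ replaced by $M$. *)

theory Defs
  imports Complex_Main "HOL-Computational_Algebra.Polynomial"
begin

definition stirling1 :: "nat \<Rightarrow> nat \<Rightarrow> real" where
  "stirling1 n k = coeff (\<Prod>i<n. [:- real i, 1:]) k"

definition compositions :: "nat \<Rightarrow> nat list set" where
  "compositions N = {I. (\<forall>a\<in>set I. 1 \<le> a) \<and> sum_list I = N}"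

definition mult1 :: "nat list \<Rightarrow> real" where
  "mult1 I = - ((-1) ^ length I) * fact (sum_list I) * fact (sum_list I - 1)
     * (\<Prod>j<length I. 1 / (fact (I ! j) * fact (I ! j - 1)))
     * (\<Prod>j<length I - 1. 1 / real (I ! j + I ! (j + 1)))"

definition multk :: "nat \<Rightarrow> nat list \<Rightarrow> real" where
  "multk k I =
    (if k = 1 then mult1 I
     else (let N = sum_list I; d = (\<Prod>i\<in>{1..k-1}. real (N - i)) in
       if length I = 1 then stirling1 N (N - k + 1) / d * mult1 I
       else (\<Sum>j<k. stirling1 N (N - j) * real (sum_list (tl I)) ^ (k - 1 - j)) / d
              * mult1 I))"

text \<open>P_{2I} = P_{2 I_1} o ... o P_{2 I_r}; here P j stands for the GJMS operator P_{2j}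
  and composition is the multiplication of the operator algebra.\<close>
definition Pcomp :: "(nat \<Rightarrow> 'a::real_algebra_1) \<Rightarrow> nat list \<Rightarrow> 'a" where
  "Pcomp P I = prod_list (map P I)"

definition Cop :: "(nat \<Rightarrow> 'a::real_algebra_1) \<Rightarrow> nat \<Rightarrow> nat \<Rightarrow> 'a" where
  "Cop P N k = (if k = N then (-1) ^ (N - 1) *\<^sub>R P N
                else (\<Sum>I\<in>compositions N. multk k I *\<^sub>R Pcomp P I))"

definition piop :: "(nat \<Rightarrow> 'a::real_algebra_1) \<Rightarrow> nat \<Rightarrow> nat \<Rightarrow> real \<Rightarrow> 'a" where
  "piop P n N lam = (\<Sum>k\<in>{1..N}. (1 / fact (N - k) * (lam + real n / 2 - real N) ^ (N - k))
                                   *\<^sub>R Cop P N k)"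

end

theory Submission imports Defs begin

text \<open>Put \<open>x = \<lambda> + n/2 - N\<close> and, for a composition \<open>I = (a, J)\<close> of \<open>N\<close> with \<open>|J| = b\<close>,
  let \<open>q(x) = x(x-1)...(x-N+1) / (x - b)\<close>. Synthetic division by \<open>x - b\<close> shows that the
  Stirling-number formula says \<open>m_I^(k) = m_I (N-k)!/(N-1)!\<close> times the coefficient of \<open>x^(N-k)\<close>
  in \<open>q\<close>, and for \<open>k = N\<close> the same expression gives the coefficients of \<open>C_2N^(N) = (-1)^(N-1) P_2N\<close>.
  Hence the coefficient of \<open>P_2I\<close> in \<open>\<pi>_2N(\<lambda>)\<close> is \<open>m_I q(x) / (N-1)!\<close>. At \<open>x = N - j\<close> it vanishes
  unless \<open>b = N - j\<close>, i.e. \<open>I = (j, J)\<close> with \<open>J\<close> a composition of \<open>N - j\<close>; for those the recursion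
  relating \<open>m_(j,J)\<close> to \<open>m_J\<close> turns the coefficient into \<open>(-1)^j\<close> times the coefficient of
  \<open>P_2J\<close> in \<open>\<pi>_(2N-2j)(\<lambda>)\<close>. At \<open>x = 0\<close> only the term \<open>C_2N^(N)\<close> survives.\<close>

definition falling_poly :: "nat \<Rightarrow> real poly" where
  "falling_poly N = (\<Prod>i<N. [:- real i, 1:])"

definition falling_poly_without :: "nat \<Rightarrow> nat \<Rightarrow> real poly" where
  "falling_poly_without N b = (\<Prod>i\<in>{..<N} - {b}. [:- real i, 1:])"

lemma stirling1_eq_coeff_falling_poly: "stirling1 N t = coeff (falling_poly N) t"
  by (simp add: stirling1_def falling_poly_def)

lemma coeff_falling_poly_self: "coeff (falling_poly N) N = 1"
proof -
  have "degree (falling_poly N) = N"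
    unfolding falling_poly_def by (subst degree_prod_sum_eq) auto
  then have "coeff (falling_poly N) N = lead_coeff (falling_poly N)" by simp
  also have "\<dots> = 1" unfolding falling_poly_def lead_coeff_prod by simp
  finally show ?thesis .
qed

lemma degree_falling_poly_without: "b < N \<Longrightarrow> degree (falling_poly_without N b) < N"
  unfolding falling_poly_without_def by (subst degree_prod_sum_eq) (auto simp: card_Diff_singleton)

lemma falling_poly_eq_linear_mult_without:
  "b < N \<Longrightarrow> falling_poly N = [:- real b, 1:] * falling_poly_without N b"
  unfolding falling_poly_def falling_poly_without_def by (subst prod.remove[of _ b]) auto

lemma coeff_quotient_by_linear_factor:
  fixes p q :: "'a::comm_ring_1 poly"
  assumes p: "p = [:- c, 1:] * q" and deg: "degree q < d"
  shows "coeff q m = (\<Sum>t\<in>{m<..d}. coeff p t * c ^ (t - m - 1))"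
proof (induction "d - m" arbitrary: m rule: less_induct)
  case less
  show ?case
  proof (cases "d \<le> m")
    case True
    then show ?thesis using deg by (simp add: coeff_eq_0)
  next
    case False
    have "coeff p (Suc m) = - c * coeff q (Suc m) + coeff q m"
      unfolding p by simp
    then have "coeff q m = coeff p (Suc m) + c * coeff q (Suc m)"
      by (simp add: algebra_simps)
    also have "coeff q (Suc m) = (\<Sum>t\<in>{Suc m<..d}. coeff p t * c ^ (t - Suc m - 1))"
      using less False by simp
    also have "c * \<dots> = (\<Sum>t\<in>{Suc m<..d}. coeff p t * c ^ (t - m - 1))"
      unfolding sum_distrib_left
    proof (intro sum.cong refl)
      fix t assume "t \<in> {Suc m<..d}"
      then have "t - m - 1 = Suc (t - Suc m - 1)" by auto
      then show "c * (coeff p t * c ^ (t - Suc m - 1)) = coeff p t * c ^ (t - m - 1)"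
        by (simp add: algebra_simps)
    qed
    also have "coeff p (Suc m) + \<dots> = (\<Sum>t\<in>{m<..d}. coeff p t * c ^ (t - m - 1))"
    proof -
      have "{m<..d} = insert (Suc m) {Suc m<..d}" using False by auto
      then show ?thesis by simp
    qed
    finally show ?thesis .
  qed
qed

lemma coeff_falling_poly_without:
  assumes b: "b < N" and k: "1 \<le> k" "k \<le> N"
  shows "coeff (falling_poly_without N b) (N - k) = (\<Sum>j<k. stirling1 N (N - j) * real b ^ (k - 1 - j))"
proof -
  have "coeff (falling_poly_without N b) (N - k)
      = (\<Sum>t\<in>{N - k<..N}. coeff (falling_poly N) t * real b ^ (t - (N - k) - 1))"
    using b by (intro coeff_quotient_by_linear_factor falling_poly_eq_linear_mult_without
        degree_falling_poly_without)
  also have "\<dots> = (\<Sum>j<k. coeff (falling_poly N) (N - j) * real b ^ (k - 1 - j))"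
    using k by (intro sum.reindex_bij_witness[of _ "\<lambda>j. N - j" "\<lambda>t. N - t"]) (auto simp: add.commute)
  finally show ?thesis by (simp add: stirling1_eq_coeff_falling_poly)
qed

lemma prod_diff_mult_fact: "M \<le> N \<Longrightarrow> (\<Prod>i<M. real N - real i) * fact (N - M) = fact N"
proof (induction M)
  case (Suc M)
  have "fact (N - M) = real (N - M) * (fact (N - Suc M) :: real)"
    using Suc.prems by (metis Suc_diff_Suc Suc_le_lessD fact_Suc of_nat_Suc)
  then show ?case using Suc by (simp add: of_nat_diff)
qed simp

lemma prod_atLeastAtMost_diff: "k < N \<Longrightarrow> (\<Prod>i\<in>{1..k}. real (N - i)) = fact (N - 1) / fact (N - 1 - k)"
proof -
  assume k: "k < N"
  have "(\<Prod>i\<in>{1..k}. real (N - i)) = (\<Prod>i<k. real (N - 1) - real i)"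
    using k by (intro prod.reindex_bij_witness[of _ Suc "\<lambda>i. i - 1"]) (auto simp: of_nat_diff)
  with prod_diff_mult_fact[of k "N - 1"] k show ?thesis by (simp add: field_simps)
qed

lemma prod_diff_greaterThanAtMost: "(\<Prod>i\<in>{b<..b + c}. real b - real i) = (-1) ^ c * fact c"
proof (induction c)
  case (Suc c)
  have "{b<..b + Suc c} = insert (Suc (b + c)) {b<..b + c}" by auto
  then show ?case using Suc by (simp add: algebra_simps)
qed simp

lemma poly_falling_poly_without_eq_0:
  "i < N \<Longrightarrow> i \<noteq> b \<Longrightarrow> poly (falling_poly_without N b) (real i) = 0"
  unfolding falling_poly_without_def poly_prod by (auto intro!: prod_zero bexI[of _ i])

lemma poly_falling_poly_without_self:
  assumes b: "b < N"
  shows "poly (falling_poly_without N b) (real b) = (-1) ^ (N - 1 - b) * fact b * fact (N - 1 - b)"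
proof -
  have split: "{..<N} - {b} = {..<b} \<union> {b<..b + (N - 1 - b)}" using b by auto
  have "poly (falling_poly_without N b) (real b)
      = (\<Prod>i<b. real b - real i) * (\<Prod>i\<in>{b<..b + (N - 1 - b)}. real b - real i)"
    unfolding falling_poly_without_def poly_prod split by (subst prod.union_disjoint) auto
  then show ?thesis
    using prod_diff_mult_fact[of b b] by (simp only: prod_diff_greaterThanAtMost) simp
qed

lemma poly_falling_poly_without_above:
  assumes "b < M" "M \<le> N"
  shows "poly (falling_poly_without M b) (real N) = fact N / ((real N - real b) * fact (N - M))"
proof -
  have "(\<Prod>i<M. real N - real i) = (real N - real b) * poly (falling_poly_without M b) (real N)"
    unfolding falling_poly_without_def poly_prod using assms by (subst prod.remove[of _ b]) auto
  moreover have "real N - real b \<noteq> 0" using assms by simp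
  ultimately show ?thesis
    using prod_diff_mult_fact[OF assms(2)] by (simp add: eq_divide_eq mult_ac)
qed

lemma Cons_mem_compositions_iff:
  "a # J \<in> compositions N \<longleftrightarrow> 1 \<le> a \<and> a \<le> N \<and> J \<in> compositions (N - a)"
  unfolding compositions_def by auto

lemma Nil_mem_compositions_iff: "[] \<in> compositions N \<longleftrightarrow> N = 0"
  unfolding compositions_def by auto

lemma compositions_obtain_Cons:
  assumes "I \<in> compositions N" "N \<ge> 1"
  obtains a J where "I = a # J" "1 \<le> a" "a \<le> N" "J \<in> compositions (N - a)"
  using assms by (cases I) (auto simp: Nil_mem_compositions_iff Cons_mem_compositions_iff)

lemma finite_compositions: "finite (compositions N)"
proof (rule finite_subset)
  have "length I \<le> sum_list I" if "\<forall>a\<in>set I. 1 \<le> a" for I :: "nat list"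
    using that by (induction I) auto
  then show "compositions N \<subseteq> {I. set I \<subseteq> {..N} \<and> length I \<le> N}"
    unfolding compositions_def using member_le_sum_list by fastforce
  show "finite {I. set I \<subseteq> {..N} \<and> length I \<le> N}"
    by (rule finite_lists_length_le) simp
qed

lemma mult1_singleton: "N \<ge> 1 \<Longrightarrow> mult1 [N] = 1"
  unfolding mult1_def by simp

lemma mult1_Cons_Cons:
  fixes j c :: nat and J :: "nat list"
  assumes "j \<ge> 1"
  defines "M \<equiv> sum_list (c # J)"
  shows "mult1 (j # c # J) = - mult1 (c # J) * (fact (j + M) * fact (j + M - 1))
           / (fact M * fact (M - 1) * fact j * fact (j - 1) * real (j + c))"
proof -
  define A where "A = (\<Prod>i<length (c # J). 1 / (fact ((c # J) ! i) * fact ((c # J) ! i - 1)) :: real)"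
  define B where "B = (\<Prod>i<length (c # J) - 1. 1 / real ((c # J) ! i + (c # J) ! (i + 1)))"
  define s where "s = - ((-1) ^ length (c # J) :: real)"
  define x where "x = real (j + c)"
  have "x \<noteq> 0" using assms(1) by (simp add: x_def)
  have tail: "mult1 (c # J) = s * fact M * fact (M - 1) * A * B"
    unfolding mult1_def A_def B_def M_def s_def by simp
  have "mult1 (j # c # J) = - s * fact (j + M) * fact (j + M - 1)
      * (1 / (fact j * fact (j - 1)) * A) * (1 / x * B)"
    unfolding mult1_def A_def B_def M_def s_def x_def
    by (simp only: length_Cons diff_Suc_1 prod.lessThan_Suc_shift nth_Cons_0 nth_Cons_Suc
        Suc_eq_plus1[symmetric] sum_list.Cons add.assoc power_Suc)
  with \<open>x \<noteq> 0\<close> show ?thesis unfolding tail x_def[symmetric] by (simp add: field_simps)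
qed

definition multq :: "nat \<Rightarrow> nat \<Rightarrow> nat list \<Rightarrow> real" where
  "multq N k I = coeff (falling_poly_without N (N - hd I)) (N - k)
     / (\<Prod>i\<in>{1..k-1}. real (N - i)) * mult1 I"

lemma multk_eq_multq:
  assumes I: "I \<in> compositions N" and k: "1 \<le> k" "k < N"
  shows "multk k I = multq N k I"
proof -
  obtain a J where aJ: "I = a # J" "1 \<le> a" "a \<le> N" and J: "J \<in> compositions (N - a)"
    by (rule compositions_obtain_Cons[OF I]) (use k in auto)
  have sums: "sum_list I = N" "sum_list J = N - a"
    using I J unfolding compositions_def by auto
  have multq: "multq N k I
      = (\<Sum>j<k. stirling1 N (N - j) * real (N - a) ^ (k - 1 - j)) / (\<Prod>i\<in>{1..k-1}. real (N - i)) * mult1 I"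
    using aJ k by (simp add: multq_def coeff_falling_poly_without)
  consider "k = 1" | "k \<noteq> 1" "J = []" | "k \<noteq> 1" "J \<noteq> []" by blast
  then show ?thesis
  proof cases
    case 1
    with multq show ?thesis
      by (simp add: multk_def stirling1_eq_coeff_falling_poly coeff_falling_poly_self)
  next
    case 2
    then have "a = N" using sums aJ by simp
    then have "(\<Sum>j<k. stirling1 N (N - j) * real (N - a) ^ (k - 1 - j)) = stirling1 N (N - k + 1)"
      using 2 k by (subst sum.remove[of _ "k - 1"]) (auto intro!: sum.neutral simp: Suc_diff_le)
    with multq show ?thesis using 2 aJ sums by (simp add: multk_def)
  next
    case 3
    with multq show ?thesis using aJ sums by (simp add: multk_def)
  qed
qed

lemma multq_top:
  assumes I: "I \<in> compositions N" and N: "N \<ge> 1"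
  shows "multq N N I = (if I = [N] then (-1) ^ (N - 1) else 0)"
proof -
  obtain a J where aJ: "I = a # J" "1 \<le> a" "a \<le> N" and J: "J \<in> compositions (N - a)"
    by (rule compositions_obtain_Cons[OF I N])
  have denom: "(\<Prod>i\<in>{1..N-1}. real (N - i)) = fact (N - 1)"
    using prod_atLeastAtMost_diff[of "N - 1" N] N by simp
  show ?thesis
  proof (cases "J = []")
    case True
    then have "I = [N]" using J aJ by (simp add: Nil_mem_compositions_iff)
    moreover have "coeff (falling_poly_without N 0) 0 = (-1) ^ (N - 1) * fact (N - 1)"
      using poly_falling_poly_without_self[of 0 N] N by (simp add: poly_0_coeff_0)
    ultimately show ?thesis using N denom by (simp add: multq_def mult1_singleton)
  next
    case False
    then have "N - a \<noteq> 0" using J by (cases J) (auto simp: Cons_mem_compositions_iff)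
    then have "poly (falling_poly_without N (N - a)) (real 0) = 0"
      using aJ by (intro poly_falling_poly_without_eq_0) auto
    then show ?thesis using False aJ by (simp add: multq_def poly_0_coeff_0)
  qed
qed

lemma Cop_eq_sum_multq:
  assumes N: "N \<ge> 1" and k: "1 \<le> k" "k \<le> N"
  shows "Cop P N k = (\<Sum>I\<in>compositions N. multq N k I *\<^sub>R Pcomp P I)"
proof (cases "k < N")
  case True
  then show ?thesis unfolding Cop_def using k by (auto intro!: sum.cong simp: multk_eq_multq)
next
  case False
  then have "k = N" using k by simp
  moreover have "[N] \<in> compositions N" using N unfolding compositions_def by simp
  ultimately have "Cop P N k
      = (\<Sum>I\<in>compositions N. if I = [N] then (-1) ^ (N - 1) *\<^sub>R Pcomp P I else 0)"
    by (simp add: Cop_def Pcomp_def finite_compositions)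
  also have "\<dots> = (\<Sum>I\<in>compositions N. multq N k I *\<^sub>R Pcomp P I)"
    using N \<open>k = N\<close> by (intro sum.cong refl) (simp add: multq_top)
  finally show ?thesis .
qed

definition pi_coeff :: "nat \<Rightarrow> nat list \<Rightarrow> real \<Rightarrow> real" where
  "pi_coeff N I x = mult1 I / fact (N - 1) * poly (falling_poly_without N (N - hd I)) x"

lemma sum_multq_eq_pi_coeff:
  assumes I: "I \<in> compositions N" and N: "N \<ge> 1"
  shows "(\<Sum>k\<in>{1..N}. x ^ (N - k) / fact (N - k) * multq N k I) = pi_coeff N I x"
proof -
  obtain a J where aJ: "I = a # J" "1 \<le> a" "a \<le> N"
    by (rule compositions_obtain_Cons[OF I N])
  define q where "q = falling_poly_without N (N - hd I)"
  have "(\<Sum>k\<in>{1..N}. x ^ (N - k) / fact (N - k) * multq N k I)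
      = (\<Sum>k\<in>{1..N}. mult1 I / fact (N - 1) * (coeff q (N - k) * x ^ (N - k)))"
  proof (intro sum.cong refl)
    fix k assume "k \<in> {1..N}"
    then have "k - 1 < N" and "N - 1 - (k - 1) = N - k" by auto
    then have "(\<Prod>i\<in>{1..k-1}. real (N - i)) = fact (N - 1) / fact (N - k)"
      using prod_atLeastAtMost_diff[of "k - 1" N] by (simp only:)
    then show "x ^ (N - k) / fact (N - k) * multq N k I
        = mult1 I / fact (N - 1) * (coeff q (N - k) * x ^ (N - k))"
      by (simp add: multq_def q_def field_simps)
  qed
  also have "\<dots> = mult1 I / fact (N - 1) * (\<Sum>m<N. coeff q m * x ^ m)"
    unfolding sum_distrib_left[symmetric]
    by (intro arg_cong[where f = "(*) _"] sum.reindex_bij_witness[of _ "\<lambda>m. N - m" "\<lambda>k. N - k"]) auto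
  also have "(\<Sum>m<N. coeff q m * x ^ m) = poly q x"
    unfolding poly_altdef using aJ degree_falling_poly_without[of "N - a" N]
    by (intro sum.mono_neutral_right) (auto simp: q_def coeff_eq_0)
  finally show ?thesis unfolding pi_coeff_def q_def .
qed

lemma piop_eq_sum_pi_coeff:
  assumes N: "N \<ge> 1"
  shows "piop P n N lam = (\<Sum>I\<in>compositions N. pi_coeff N I (lam + real n / 2 - real N) *\<^sub>R Pcomp P I)"
proof -
  define x where "x = lam + real n / 2 - real N"
  have "piop P n N lam
      = (\<Sum>k\<in>{1..N}. \<Sum>I\<in>compositions N. (x ^ (N - k) / fact (N - k) * multq N k I) *\<^sub>R Pcomp P I)"
    unfolding piop_def x_def[symmetric] using N
    by (intro sum.cong refl) (simp add: Cop_eq_sum_multq scaleR_sum_right)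
  also have "\<dots> = (\<Sum>I\<in>compositions N. \<Sum>k\<in>{1..N}. (x ^ (N - k) / fact (N - k) * multq N k I) *\<^sub>R Pcomp P I)"
    by (rule sum.swap)
  also have "\<dots> = (\<Sum>I\<in>compositions N. pi_coeff N I x *\<^sub>R Pcomp P I)"
    unfolding scaleR_sum_left[symmetric] using N by (intro sum.cong refl) (simp only: sum_multq_eq_pi_coeff)
  finally show ?thesis unfolding x_def .
qed

lemma pi_coeff_at_other_head:
  assumes "I \<in> compositions N" "1 \<le> j" "j < N" "hd I \<noteq> j"
  shows "pi_coeff N I (real (N - j)) = 0"
proof -
  obtain a J where "I = a # J" "1 \<le> a" "a \<le> N"
    by (rule compositions_obtain_Cons[OF assms(1)]) (use assms(3) in auto)
  with assms have "poly (falling_poly_without N (N - hd I)) (real (N - j)) = 0"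
    by (intro poly_falling_poly_without_eq_0) auto
  then show ?thesis by (simp add: pi_coeff_def)
qed

lemma pi_coeff_Cons:
  assumes j: "1 \<le> j" and J: "J \<in> compositions M" and M: "M \<ge> 1"
  shows "pi_coeff (j + M) (j # J) (real M) = (-1) ^ j * pi_coeff M J (real (j + M))"
proof -
  obtain c J' where cJ: "J = c # J'" "1 \<le> c" "c \<le> M" and sM: "sum_list (c # J') = M"
    by (rule compositions_obtain_Cons[OF J M]) (use J in \<open>auto simp: compositions_def\<close>)
  have left: "poly (falling_poly_without (j + M) M) (real M) = (-1) ^ (j - 1) * fact M * fact (j - 1)"
    using poly_falling_poly_without_self[of M "j + M"] j by simp
  define x where "x = real (j + c)"
  have "x \<noteq> 0" using j by (simp add: x_def)
  have right: "poly (falling_poly_without M (M - c)) (real (j + M)) = fact (j + M) / (x * fact j)"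
    using poly_falling_poly_without_above[of "M - c" M "j + M"] cJ by (simp add: of_nat_diff x_def)
  have sign: "(-1 :: real) ^ j = - ((-1) ^ (j - 1))" using j by (cases j) auto
  have "pi_coeff (j + M) (j # J) (real M)
      = mult1 (j # c # J') / fact (j + M - 1) * ((-1) ^ (j - 1) * fact M * fact (j - 1))"
    unfolding pi_coeff_def using cJ(1) left by simp
  also have "\<dots> = (-1) ^ j * (mult1 (c # J') / fact (M - 1) * (fact (j + M) / (x * fact j)))"
    unfolding mult1_Cons_Cons[OF j] sign x_def[symmetric] sM
    using \<open>x \<noteq> 0\<close> by (simp add: divide_simps)
  also have "\<dots> = (-1) ^ j * pi_coeff M J (real (j + M))"
    unfolding pi_coeff_def right[symmetric] cJ(1) by simp
  finally show ?thesis .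
qed

lemma sum_pi_coeff_restrict_head:
  assumes j: "1 \<le> j" "j < N"
  shows "(\<Sum>I\<in>compositions N. pi_coeff N I (real (N - j)) *\<^sub>R Pcomp P I)
       = (\<Sum>J\<in>compositions (N - j). pi_coeff N (j # J) (real (N - j)) *\<^sub>R Pcomp P (j # J))"
proof -
  have "(\<Sum>I\<in>compositions N. pi_coeff N I (real (N - j)) *\<^sub>R Pcomp P I)
      = (\<Sum>I\<in>Cons j ` compositions (N - j). pi_coeff N I (real (N - j)) *\<^sub>R Pcomp P I)"
  proof (rule sum.mono_neutral_right[OF finite_compositions])
    show "Cons j ` compositions (N - j) \<subseteq> compositions N"
      using j by (auto simp: Cons_mem_compositions_iff)
    show "\<forall>I\<in>compositions N - Cons j ` compositions (N - j). pi_coeff N I (real (N - j)) *\<^sub>R Pcomp P I = 0"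
    proof
      fix I assume "I \<in> compositions N - Cons j ` compositions (N - j)"
      then have I: "I \<in> compositions N" and not_j: "I \<notin> Cons j ` compositions (N - j)" by auto
      obtain a J where aJ: "I = a # J" "1 \<le> a" "a \<le> N" "J \<in> compositions (N - a)"
        by (rule compositions_obtain_Cons[OF I]) (use j in auto)
      have "hd I \<noteq> j"
      proof
        assume "hd I = j"
        with aJ have "I \<in> Cons j ` compositions (N - j)" by simp
        with not_j show False by contradiction
      qed
      with I j have "pi_coeff N I (real (N - j)) = 0"
        by (intro pi_coeff_at_other_head)
      then show "pi_coeff N I (real (N - j)) *\<^sub>R Pcomp P I = 0" by simp
    qed
  qed
  also have "\<dots> = (\<Sum>J\<in>compositions (N - j). pi_coeff N (j # J) (real (N - j)) *\<^sub>R Pcomp P (j # J))"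
    by (subst sum.reindex) (auto simp: inj_on_def)
  finally show ?thesis .
qed

lemma piop_at_shifted_integer:
  fixes P :: "nat \<Rightarrow> 'a::real_algebra_1"
  assumes j: "1 \<le> j" "j < N"
  shows "piop P n N (- real n / 2 + 2 * real N - real j)
       = (-1) ^ j *\<^sub>R (P j * piop P n (N - j) (- real n / 2 + 2 * real N - real j))"
proof -
  define M where "M = N - j"
  define lam where "lam = - real n / 2 + 2 * real N - real j"
  have jM: "N = j + M" "1 \<le> M" using j unfolding M_def by auto
  have shift_N: "lam + real n / 2 - real N = real M" and shift_M: "lam + real n / 2 - real M = real N"
    using jM by (simp_all add: lam_def)
  have "piop P n N lam = (\<Sum>I\<in>compositions N. pi_coeff N I (real M) *\<^sub>R Pcomp P I)"
    using piop_eq_sum_pi_coeff[of N P n lam] j unfolding shift_N by simp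
  also have "\<dots> = (\<Sum>J\<in>compositions M. pi_coeff N (j # J) (real M) *\<^sub>R Pcomp P (j # J))"
    using sum_pi_coeff_restrict_head[OF j, of P] unfolding M_def .
  also have "\<dots> = (\<Sum>J\<in>compositions M. ((-1) ^ j * pi_coeff M J (real N)) *\<^sub>R (P j * Pcomp P J))"
    using j jM by (intro sum.cong refl) (simp add: pi_coeff_Cons Pcomp_def)
  also have "\<dots> = (-1) ^ j *\<^sub>R (P j * piop P n M lam)"
    using piop_eq_sum_pi_coeff[OF \<open>1 \<le> M\<close>, of P n lam] unfolding shift_M
    by (simp add: sum_distrib_left scaleR_sum_right)
  finally show ?thesis unfolding lam_def M_def .
qed

lemma piop_at_center:
  assumes "N \<ge> 1"
  shows "piop P n N (- real n / 2 + real N) = (-1) ^ (N - 1) *\<^sub>R P N"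
proof -
  have "piop P n N (- real n / 2 + real N) = (\<Sum>k\<in>{1..N}. if k = N then Cop P N k else 0)"
    unfolding piop_def by (intro sum.cong refl) auto
  also have "\<dots> = (-1) ^ (N - 1) *\<^sub>R P N"
    using assms by (simp add: Cop_def)
  finally show ?thesis .
qed

theorem theorem2p2:
  fixes P :: "nat \<Rightarrow> 'a::real_algebra_1" and n N :: nat
  assumes "N \<ge> 1" and "even n \<longrightarrow> 2 * N \<le> n"
  shows "(\<forall>j\<in>{1..N-1}.
            piop P n N (- real n / 2 + 2 * real N - real j)
              = (-1) ^ j *\<^sub>R (P j * piop P n (N - j) (- real n / 2 + 2 * real N - real j)))
         \<and> piop P n N (- real n / 2 + real N) = (-1) ^ (N - 1) *\<^sub>R P N"
  using piop_at_shifted_integer[of _ N P n] piop_at_center[OF \<open>N \<ge> 1\<close>] by auto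

end
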